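(* Let $\Sigma$ be a graded alphabet, $t\in T_\Sigma$, and $A_t=(\Sigma,Q,\nu,\delta)$ the subtree automaton of $t$. Then for every tree $r\in\mathrm{SubTree}(t)$, $\Delta(r)=\{r'\in Q\mid\mathrm{h}(r')=r\}$.
   Context: A graded alphabet is a finite set $\Sigma=\bigcup_{k\in\mathbb{N}}\Sigma_k$; $T_\Sigma$ is the set of trees $f(t_1,\ldots,t_k)$ with $f\in\Sigma_k$. A RWTA is $A=(\Sigma,Q,\nu,\delta)$ with $Q$ finite, $\nu:Q\to\mathbb{N}$, $\delta\subseteq\bigcup_k Q\times\Sigma_k\times Q^k$; $\delta(f,q_1,\ldots,q_k)=\{q\mid(q,f,q_1,\ldots,q_k)\in\delta\}$, extended to subsets by union over tuples; $\Delta(f(t_1,\ldots,t_k))=\delta(f,\Delta(t_1),\ldots,\Delta(t_k))$. For $t=f(t_1,\ldots,t_k)$, $\mathrm{SubTree}(t)=\{t\}\cup\bigcup_j\mathrm{SubTree}(t_j)$. The tree $t^\sharp$ is obtained from $t$ by indexing each symbol occurrence with its position in a preorder traversal (indexed symbols are distinct and keep their arity); $\Sigma_{t^\sharp}$ is the set of indexed symbols of $t^\sharp$; $\mathrm{h}$ erases indices (on symbols and trees). The subtree automaton of $t$ is $A_t=(\Sigma,Q,\nu,\delta)$ with $Q=\mathrm{SubTree}(t^\sharp)$, $\nu\equiv1$, and for $f\in\Sigma_{t^\sharp}$ of arity $k$ and $t_1,\ldots,t_{k+1}\in Q$: $t_{k+1}\in\delta(\mathrm{h}(f),t_1,\ldots,t_k)$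 iff $t_{k+1}=f(t_1,\ldots,t_k)$. *)

theory Defs
  imports Main
begin

datatype 'a tree = Node 'a "'a tree list"

(* T_Sigma: trees over the graded alphabet (Sigma, ar), Sigma_k = {f : Sigma. ar f = k} *)
fun wf_tree :: "'a set \<Rightarrow> ('a \<Rightarrow> nat) \<Rightarrow> 'a tree \<Rightarrow> bool" where
  "wf_tree \<Sigma> ar (Node f ts) =
     (f \<in> \<Sigma> \<and> length ts = ar f \<and> (\<forall>t \<in> set ts. wf_tree \<Sigma> ar t))"

fun SubTree :: "'a tree \<Rightarrow> 'a tree set" where
  "SubTree (Node f ts) = insert (Node f ts) (\<Union>t \<in> set ts. SubTree t)"

fun labels :: "'a tree \<Rightarrow> 'a set" where
  "labels (Node f ts) = insert f (\<Union>t \<in> set ts. labels t)"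

fun tsize :: "'a tree \<Rightarrow> nat" where
  "tsize (Node f ts) = Suc (sum_list (map tsize ts))"

fun idx :: "nat \<Rightarrow> 'a tree \<Rightarrow> ('a \<times> nat) tree"
and idx_list :: "nat \<Rightarrow> 'a tree list \<Rightarrow> ('a \<times> nat) tree list" where
  "idx n (Node f ts) = Node (f, n) (idx_list (Suc n) ts)"
| "idx_list n [] = []"
| "idx_list n (t # ts) = idx n t # idx_list (n + tsize t) ts"

(* t^sharp: positions in preorder, numbered from 1 *)
definition sharp :: "'a tree \<Rightarrow> ('a \<times> nat) tree" where
  "sharp t = idx 1 t"

definition h_sym :: "'a \<times> nat \<Rightarrow> 'a" where
  "h_sym f = fst f"

definition h :: "('a \<times> nat) tree \<Rightarrow> 'a tree" where
  "h t = map_tree h_sym t"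

(* RWTA (Sigma, Q, nu, delta); a transition (q, f, [q_1,...,q_k]) stands for the tuple (q, f, q_1, ..., q_k) *)
record ('a, 'q) rwta =
  alph :: "'a set"
  states :: "'q set"
  nu :: "'q \<Rightarrow> nat"
  trans :: "('q \<times> 'a \<times> 'q list) set"

(* Delta(f(t_1,...,t_k)) = delta(f, Delta(t_1), ..., Delta(t_k)), with delta extended to sets
   by union over all tuples in Delta(t_1) x ... x Delta(t_k) *)
fun Delta :: "('q \<times> 'a \<times> 'q list) set \<Rightarrow> 'a tree \<Rightarrow> 'q set" where
  "Delta \<delta> (Node f ts) =
     {q. \<exists>qs \<in> listset (map (Delta \<delta>) ts). (q, f, qs) \<in> \<delta>}"

definition subtree_aut :: "'a set \<Rightarrow> ('a \<Rightarrow> nat) \<Rightarrow> 'a tree \<Rightarrow> ('a, ('a \<times> nat) tree) rwta" where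
  "subtree_aut \<Sigma> ar t =
     \<lparr> alph = \<Sigma>,
       states = SubTree (sharp t),
       nu = (\<lambda>_. 1),
       trans = {(q, h_sym f, qs) | q f qs.
                  f \<in> labels (sharp t) \<and> length qs = ar (h_sym f) \<and>
                  set qs \<subseteq> SubTree (sharp t) \<and> q \<in> SubTree (sharp t) \<and>
                  q = Node f qs} \<rparr>"

end

theory Submission
  imports Defs
begin

text \<open>A tuple of states for the children of r is exactly a list of
indexed subtrees erasing to those children; a transition on it exists precisely when the tuple is
the child list of an indexed subtree, because an indexed symbol determines the state it labels.
The arity side condition on transitions is harmless since t, hence r, is well formed.\<close>

lemma listset_map_fibres:
  "qs \<in> listset (map (\<lambda>x. {q \<in> Q. g q = x}) xs) \<longleftrightarrow> set qs \<subseteq> Q \<and> map g qs = xs"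
proof (induction xs arbitrary: qs)
  case Nil then show ?case by auto
next
  case (Cons x xs) then show ?case
    by (cases qs) (auto simp: set_Cons_def)
qed

lemma SubTree_self: "t \<in> SubTree t"
  by (cases t) auto

lemma SubTree_trans: "s \<in> SubTree u \<Longrightarrow> u \<in> SubTree t \<Longrightarrow> s \<in> SubTree t"
  by (induction t) auto

lemma SubTree_children_subset: "Node f ts \<in> SubTree t \<Longrightarrow> set ts \<subseteq> SubTree t"
proof
  fix s assume "Node f ts \<in> SubTree t" and "s \<in> set ts"
  then show "s \<in> SubTree t"
    using SubTree_self[of s] SubTree_trans[of s "Node f ts" t] by auto
qed

lemma SubTree_label_in_labels: "Node f ts \<in> SubTree t \<Longrightarrow> f \<in> labels t"
  by (induction t) auto

lemma wf_tree_SubTree: "s \<in> SubTree t \<Longrightarrow> wf_tree \<Sigma> ar t \<Longrightarrow> wf_tree \<Sigma> ar s"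
  by (induction t) auto

lemma h_Node: "h (Node f qs) = Node (h_sym f) (map h qs)"
  by (simp add: h_def)

lemma trans_subtree_aut_iff:
  "(q, g, qs) \<in> trans (subtree_aut \<Sigma> ar t) \<longleftrightarrow>
     (\<exists>f. q = Node f qs \<and> g = h_sym f \<and> q \<in> SubTree (sharp t) \<and> length qs = ar g)"
  by (auto simp: subtree_aut_def intro: SubTree_label_in_labels dest: SubTree_children_subset)

theorem lemma7:
  fixes \<Sigma> :: "'a set" and ar :: "'a \<Rightarrow> nat" and t r :: "'a tree"
  assumes "finite \<Sigma>"
    and "wf_tree \<Sigma> ar t"
    and "r \<in> SubTree t"
  shows "Delta (trans (subtree_aut \<Sigma> ar t)) r
           = {r' \<in> states (subtree_aut \<Sigma> ar t). h r' = r}"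
  using assms(3)
proof (induction r)
  case (Node g ts)
  let ?T = "SubTree (sharp t)"
  let ?\<delta> = "trans (subtree_aut \<Sigma> ar t)"
  have children: "map (Delta ?\<delta>) ts = map (\<lambda>x. {q \<in> ?T. h q = x}) ts"
    using Node SubTree_children_subset by (fastforce simp: subtree_aut_def)
  have arity: "length ts = ar g"
    using wf_tree_SubTree[OF Node.prems assms(2)] by simp
  have "Delta ?\<delta> (Node g ts) = {q. \<exists>qs. set qs \<subseteq> ?T \<and> map h qs = ts \<and> (q, g, qs) \<in> ?\<delta>}"
    by (simp only: Delta.simps children listset_map_fibres Bex_def conj_assoc)
  also have "\<dots> =
          {q. \<exists>f qs. q = Node f qs \<and> g = h_sym f \<and> q \<in> ?T \<and> set qs \<subseteq> ?T \<and> map h qs = ts}"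
    using arity by (auto simp: trans_subtree_aut_iff)
  also have "\<dots> = {q \<in> ?T. h q = Node g ts}"
  proof (intro set_eqI iffI)
    fix q assume "q \<in> {q \<in> ?T. h q = Node g ts}"
    moreover obtain f qs where "q = Node f qs" by (cases q)
    ultimately show "q \<in> {q. \<exists>f qs. q = Node f qs \<and> g = h_sym f \<and> q \<in> ?T \<and> set qs \<subseteq> ?T \<and> map h qs = ts}"
      using SubTree_children_subset[of f qs "sharp t"] by (simp add: h_Node) (metis prod.collapse)
  qed (auto simp: h_Node)
  finally show ?case by (simp add: subtree_aut_def)
qed

end
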